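(* Suppose $H$ satisfies (B.1) and (B.2) and, for each fixed $s\in\mathbb{R}^n$, the functional $(t,x(\cdot))\mapsto H(t,x(\cdot),s)$ is non-anticipative. If a minimax solution $\varphi$ of the problem $\partial_t\varphi+H(t,x(\cdot),\nabla\varphi)=0$ on $[0,T)\times C([-h,T],\mathbb{R}^n)$, $\varphi(T,x(\cdot))=\sigma(x(\cdot))$, is $ci$-differentiable at some point $(t,x(\cdot))\in[0,T)\times C([-h,T],\mathbb{R}^n)$, then $\partial_t\varphi(t,x(\cdot))+H(t,x(\cdot),\nabla\varphi(t,x(\cdot)))=0$ at this point.
   Context: Fix $n\in\mathbb{N}$, $h>0$, $T>0$; $\langle\cdot,\cdot\rangle$, $\|\cdot\|$ Euclidean. $C([-h,T],\mathbb{R}^n)$ has the sup norm $\|\cdot\|_{[-h,T]}$, and $[0,T]\times C([-h,T],\mathbb{R}^n)$ the metric $|t-\tau|+\|x(\cdot)-y(\cdot)\|_{[-h,T]}$. Non-anticipative: $\varphi(t,x(\cdot))=\varphi(t,y(\cdot))$ whenever $t\in[0,T)$ and $x=y$ on $[-h,t]$. $\mathrm{Lip}(t,x(\cdot))$: functions $y(\cdot)\in C([-h,T],\mathbb{R}^n)$ with $y=x$ on $[-h,t]$, Lipschitz on $[t,T]$. $ci$-differentiable at $(t,x(\cdot))$, $t<T$: there exist $\partial_t\varphi(t,x(\cdot))\in\mathbb{R}$, $\nabla\varphi(t,x(\cdot))\in\mathbb{R}^n$ with $\varphi(\tau,y(\cdot))-\varphi(t,x(\cdot))=\partial_t\varphi(t,x(\cdot))(\tau-t)+\langle\nabla\varphi(t,x(\cdot)),y(\tau)-x(t)\rangle+o(\tau-t)$,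 $\tau\in(t,T]$, for every $y(\cdot)\in\mathrm{Lip}(t,x(\cdot))$, $o(\delta)/\delta\to0$ as $\delta\downarrow0$ ($o$ may depend on $y$). $H:[0,T]\times C([-h,T],\mathbb{R}^n)\times\mathbb{R}^n\to\mathbb{R}$, $\sigma:C([-h,T],\mathbb{R}^n)\to\mathbb{R}$. (B.1) $H$, $\sigma$ continuous. (B.2) there is $c>0$ with $|H(t,x(\cdot),s)-H(t,x(\cdot),r)|\le c(1+\max_{\tau\in[-h,t]}\|x(\tau)\|)\|s-r\|$ for all $t,x(\cdot),s,r$. $Y(t,x(\cdot))$: the $y(\cdot)\in\mathrm{Lip}(t,x(\cdot))$ with $\|\dot y(\tau)\|\le c(1+\max_{\xi\in[-h,\tau]}\|y(\xi)\|)$ for a.e. $\tau\in[t,T]$. Minimax solution: $\varphi$ non-anticipative, continuous, $\varphi(T,\cdot)=\sigma$, and (M): for every $(t,x(\cdot))\in[0,T)\times C([-h,T],\mathbb{R}^n)$ and $s\in\mathbb{R}^n$ there is $y(\cdot)\in Y(t,x(\cdot))$ with $\varphi(\tau,y(\cdot))-\varphi(t,x(\cdot))=\langle s,y(\tau)-x(t)\rangle-\int_t^\tau H(\xi,y(\cdot),s)\,d\xi$ for all $\tau\in[t,T]$. *)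

theory Defs
  imports "HOL-Analysis.Analysis"
begin

text \<open>Elements of C([-h,T],R^n) are represented by functions real => real^'n that are
  continuous on [-h,T] and extended constantly outside [-h,T] (canonical representative),
  so that equality of representatives is equality on [-h,T].\<close>

definition Cspace :: "real \<Rightarrow> real \<Rightarrow> (real \<Rightarrow> real^'n) set" where
  "Cspace h T = {x. continuous_on {-h..T} x \<and> (\<forall>s. x s = x (max (-h) (min T s)))}"

definition supn :: "real \<Rightarrow> real \<Rightarrow> (real \<Rightarrow> real^'n) \<Rightarrow> real" where
  "supn a b x = Sup (norm ` x ` {a..b})"

definition nonanticipative ::
  "real \<Rightarrow> real \<Rightarrow> (real \<Rightarrow> (real \<Rightarrow> real^'n) \<Rightarrow> real) \<Rightarrow> bool" where
  "nonanticipative h T \<phi> \<longleftrightarrow>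
     (\<forall>t x y. 0 \<le> t \<and> t < T \<and> x \<in> Cspace h T \<and> y \<in> Cspace h T \<and>
        (\<forall>s\<in>{-h..t}. x s = y s) \<longrightarrow> \<phi> t x = \<phi> t y)"

definition cont_functional ::
  "real \<Rightarrow> real \<Rightarrow> (real \<Rightarrow> (real \<Rightarrow> real^'n) \<Rightarrow> real) \<Rightarrow> bool" where
  "cont_functional h T \<phi> \<longleftrightarrow>
     (\<forall>t\<in>{0..T}. \<forall>x\<in>Cspace h T. \<forall>\<epsilon>>0. \<exists>\<delta>>0. \<forall>\<tau>\<in>{0..T}. \<forall>y\<in>Cspace h T.
        \<bar>t - \<tau>\<bar> + supn (-h) T (\<lambda>s. x s - y s) < \<delta> \<longrightarrow> \<bar>\<phi> \<tau> y - \<phi> t x\<bar> < \<epsilon>)"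

definition cont_ham ::
  "real \<Rightarrow> real \<Rightarrow> (real \<Rightarrow> (real \<Rightarrow> real^'n) \<Rightarrow> real^'n \<Rightarrow> real) \<Rightarrow> bool" where
  "cont_ham h T H \<longleftrightarrow>
     (\<forall>t\<in>{0..T}. \<forall>x\<in>Cspace h T. \<forall>s. \<forall>\<epsilon>>0. \<exists>\<delta>>0. \<forall>\<tau>\<in>{0..T}. \<forall>y\<in>Cspace h T. \<forall>r.
        \<bar>t - \<tau>\<bar> + supn (-h) T (\<lambda>\<xi>. x \<xi> - y \<xi>) + norm (s - r) < \<delta> \<longrightarrow>
        \<bar>H \<tau> y r - H t x s\<bar> < \<epsilon>)"

definition cont_terminal ::
  "real \<Rightarrow> real \<Rightarrow> ((real \<Rightarrow> real^'n) \<Rightarrow> real) \<Rightarrow> bool" where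
  "cont_terminal h T \<sigma> \<longleftrightarrow>
     (\<forall>x\<in>Cspace h T. \<forall>\<epsilon>>0. \<exists>\<delta>>0. \<forall>y\<in>Cspace h T.
        supn (-h) T (\<lambda>s. x s - y s) < \<delta> \<longrightarrow> \<bar>\<sigma> y - \<sigma> x\<bar> < \<epsilon>)"

definition LipSet :: "real \<Rightarrow> real \<Rightarrow> real \<Rightarrow> (real \<Rightarrow> real^'n) \<Rightarrow> (real \<Rightarrow> real^'n) set" where
  "LipSet h T t x = {y \<in> Cspace h T. (\<forall>s\<in>{-h..t}. y s = x s) \<and> (\<exists>L. L-lipschitz_on {t..T} y)}"

definition YSet :: "real \<Rightarrow> real \<Rightarrow> real \<Rightarrow> real \<Rightarrow> (real \<Rightarrow> real^'n) \<Rightarrow> (real \<Rightarrow> real^'n) set" where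
  "YSet h T c t x = {y \<in> LipSet h T t x.
     \<exists>N \<in> null_sets lebesgue. \<forall>\<tau>\<in>{t..T} - N. \<exists>D.
        (y has_vector_derivative D) (at \<tau> within {t..T}) \<and>
        norm D \<le> c * (1 + supn (-h) \<tau> y)}"

definition minimax_solution ::
  "real \<Rightarrow> real \<Rightarrow> real \<Rightarrow> (real \<Rightarrow> (real \<Rightarrow> real^'n) \<Rightarrow> real^'n \<Rightarrow> real) \<Rightarrow>
   ((real \<Rightarrow> real^'n) \<Rightarrow> real) \<Rightarrow> (real \<Rightarrow> (real \<Rightarrow> real^'n) \<Rightarrow> real) \<Rightarrow> bool" where
  "minimax_solution h T c H \<sigma> \<phi> \<longleftrightarrow>
     nonanticipative h T \<phi> \<and> cont_functional h T \<phi> \<and>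
     (\<forall>x\<in>Cspace h T. \<phi> T x = \<sigma> x) \<and>
     (\<forall>t x s. 0 \<le> t \<and> t < T \<and> x \<in> Cspace h T \<longrightarrow>
        (\<exists>y\<in>YSet h T c t x. \<forall>\<tau>\<in>{t..T}.
           \<phi> \<tau> y - \<phi> t x = inner s (y \<tau> - x t) - integral {t..\<tau>} (\<lambda>\<xi>. H \<xi> y s)))"

definition ci_differentiable_with ::
  "real \<Rightarrow> real \<Rightarrow> (real \<Rightarrow> (real \<Rightarrow> real^'n) \<Rightarrow> real) \<Rightarrow> real \<Rightarrow> (real \<Rightarrow> real^'n) \<Rightarrow>
   real \<Rightarrow> real^'n \<Rightarrow> bool" where
  "ci_differentiable_with h T \<phi> t x dt g \<longleftrightarrow>
     (\<forall>y\<in>LipSet h T t x.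
        ((\<lambda>\<tau>. (\<phi> \<tau> y - \<phi> t x - dt * (\<tau> - t) - inner g (y \<tau> - x t)) / (\<tau> - t))
          \<longlongrightarrow> 0) (at t within {t<..T}))"

end

theory Submission
  imports Defs
begin

text \<open>Choose \<open>s = \<nabla>\<phi>(t,x)\<close> in the minimax condition (M). The resulting path \<open>y\<close> lies in
  \<open>Lip(t,x)\<close>, so the ci-expansion of \<open>\<phi>\<close> holds along it; comparing it with the identity (M),
  the term \<open>\<langle>\<nabla>\<phi>, y(\<tau>) - x(t)\<rangle>\<close> cancels and what remains is
  \<open>\<partial>\<^sub>t\<phi> (\<tau> - t) = -\<integral>\<^sub>t\<^sup>\<tau> H(\<xi>,y,\<nabla>\<phi>) d\<xi> + o(\<tau> - t)\<close>. Dividing by \<open>\<tau> - t\<close> and letting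
  \<open>\<tau> \<down> t\<close> gives \<open>\<partial>\<^sub>t\<phi> = -H(t,y,\<nabla>\<phi>)\<close>, and \<open>H(t,y,\<cdot>) = H(t,x,\<cdot>)\<close> by non-anticipativity.\<close>

lemma supn_zero:
  fixes a b :: real
  assumes "a \<le> b"
  shows "supn a b (\<lambda>_. 0 :: real^'n) = 0"
proof -
  have "norm ` (\<lambda>_. 0 :: real^'n) ` {a..b} = {0}"
    using assms by (auto intro!: image_eqI[of 0 norm 0] image_eqI[of 0 _ a])
  then show ?thesis
    unfolding supn_def by simp
qed

lemma cont_ham_continuous_on_time:
  assumes "cont_ham h T H" and "y \<in> Cspace h T" and "-h \<le> T"
  shows "continuous_on {0..T} (\<lambda>\<tau>. H \<tau> y s)"
  unfolding continuous_on_iff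
proof (intro ballI allI impI)
  fix a e :: real
  assume "a \<in> {0..T}" and "e > 0"
  then obtain d where "d > 0" and d: "\<forall>\<tau>\<in>{0..T}. \<forall>z\<in>Cspace h T. \<forall>r.
      \<bar>a - \<tau>\<bar> + supn (-h) T (\<lambda>\<xi>. y \<xi> - z \<xi>) + norm (s - r) < d \<longrightarrow> \<bar>H \<tau> z r - H a y s\<bar> < e"
    using assms(1,2) unfolding cont_ham_def by blast
  have "supn (-h) T (\<lambda>\<xi>. y \<xi> - y \<xi>) = 0"
    using supn_zero[OF assms(3)] by simp
  then have "\<forall>\<tau>\<in>{0..T}. dist \<tau> a < d \<longrightarrow> dist (H \<tau> y s) (H a y s) < e"
    using d assms(2) by (auto simp: dist_real_def abs_minus_commute)
  then show "\<exists>d>0. \<forall>\<tau>\<in>{0..T}. dist \<tau> a < d \<longrightarrow> dist (H \<tau> y s) (H a y s) < e"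
    using \<open>d > 0\<close> by blast
qed

lemma integral_average_tendsto_right:
  fixes f :: "real \<Rightarrow> real"
  assumes "continuous_on {t..T} f" and "t < T"
  shows "((\<lambda>u. integral {t..u} f / (u - t)) \<longlongrightarrow> f t) (at t within {t<..T})"
proof -
  have "((\<lambda>u. integral {t..u} f) has_field_derivative f t) (at t within {t..T})"
    using integral_has_vector_derivative[OF assms(1)] assms(2)
    by (simp add: has_real_derivative_iff_has_vector_derivative)
  then have "((\<lambda>u. (integral {t..u} f - integral {t..t} f) / (u - t)) \<longlongrightarrow> f t)
      (at t within {t..T})"
    by (simp add: has_field_derivative_iff)
  then show ?thesis
    using tendsto_within_subset[of _ _ t "{t..T}" "{t<..T}"] by (simp add: subset_iff)
qed

lemma ci_time_derivative_along_characteristic: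
  fixes f :: "real \<Rightarrow> real"
  assumes ci: "ci_differentiable_with h T \<phi> t x dt g"
    and y: "y \<in> LipSet h T t x"
    and char: "\<forall>\<tau>\<in>{t..T}. \<phi> \<tau> y - \<phi> t x = inner g (y \<tau> - x t) - integral {t..\<tau>} f"
    and f: "continuous_on {t..T} f" and "t < T"
  shows "dt + f t = 0"
proof -
  let ?q = "\<lambda>\<tau>. (\<phi> \<tau> y - \<phi> t x - dt * (\<tau> - t) - inner g (y \<tau> - x t)) / (\<tau> - t)"
  have q_tendsto_0: "(?q \<longlongrightarrow> 0) (at t within {t<..T})"
    using ci y unfolding ci_differentiable_with_def by blast
  have "\<forall>\<^sub>F \<tau> in at t within {t<..T}. - (integral {t..\<tau>} f / (\<tau> - t)) - dt = ?q \<tau>"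
    unfolding eventually_at_filter
    using char by (intro always_eventually) (auto simp: field_simps)
  moreover have "((\<lambda>\<tau>. - (integral {t..\<tau>} f / (\<tau> - t)) - dt) \<longlongrightarrow> - f t - dt) (at t within {t<..T})"
    using integral_average_tendsto_right[OF f \<open>t < T\<close>] by (intro tendsto_intros)
  ultimately have q_tendsto: "(?q \<longlongrightarrow> - f t - dt) (at t within {t<..T})"
    by (rule Lim_transform_eventually[rotated])
  have "\<not> trivial_limit (at t within {t<..T})"
    using \<open>t < T\<close> by (simp add: trivial_limit_within islimpt_Ioc)
  then have "- f t - dt = 0"
    using tendsto_unique q_tendsto q_tendsto_0 by blast
  then show ?thesis
    by simp
qed

theorem proposition6:
  fixes h T c :: real
    and H :: "real \<Rightarrow> (real \<Rightarrow> real^'n) \<Rightarrow> real^'n \<Rightarrow> real"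
    and \<sigma> :: "(real \<Rightarrow> real^'n) \<Rightarrow> real"
    and \<phi> :: "real \<Rightarrow> (real \<Rightarrow> real^'n) \<Rightarrow> real"
    and t dt :: real and x :: "real \<Rightarrow> real^'n" and g :: "real^'n"
  assumes "h > 0" and "T > 0" and "c > 0"
    and B1H: "cont_ham h T H" and B1\<sigma>: "cont_terminal h T \<sigma>"
    and B2: "\<forall>\<tau>\<in>{0..T}. \<forall>y\<in>Cspace h T. \<forall>s r.
               \<bar>H \<tau> y s - H \<tau> y r\<bar> \<le> c * (1 + supn (-h) \<tau> y) * norm (s - r)"
    and Hna: "\<forall>s. nonanticipative h T (\<lambda>\<tau> y. H \<tau> y s)"
    and mm: "minimax_solution h T c H \<sigma> \<phi>"
    and t: "0 \<le> t" "t < T" and x: "x \<in> Cspace h T"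
    and ci: "ci_differentiable_with h T \<phi> t x dt g"
  shows "dt + H t x g = 0"
proof -
  obtain y where "y \<in> YSet h T c t x" and char: "\<forall>\<tau>\<in>{t..T}.
      \<phi> \<tau> y - \<phi> t x = inner g (y \<tau> - x t) - integral {t..\<tau>} (\<lambda>\<xi>. H \<xi> y g)"
    using mm t x unfolding minimax_solution_def by blast
  then have y: "y \<in> LipSet h T t x"
    unfolding YSet_def by auto
  then have "y \<in> Cspace h T" and y_eq_x: "\<forall>s\<in>{-h..t}. y s = x s"
    unfolding LipSet_def by auto
  have "continuous_on {0..T} (\<lambda>\<xi>. H \<xi> y g)"
    using \<open>h > 0\<close> \<open>T > 0\<close> by (intro cont_ham_continuous_on_time[OF B1H \<open>y \<in> Cspace h T\<close>]) simp
  then have "continuous_on {t..T} (\<lambda>\<xi>. H \<xi> y g)"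
    by (rule continuous_on_subset) (use t in auto)
  then have "dt + H t y g = 0"
    using ci_time_derivative_along_characteristic[OF ci y char] t by blast
  moreover have "H t y g = H t x g"
    using Hna \<open>y \<in> Cspace h T\<close> x t y_eq_x unfolding nonanticipative_def by metis
  ultimately show ?thesis
    by simp
qed

end
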